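(* Assume (A1) and (A3) hold. Then there exists a constant $C_0>0$ such that $L(\theta)-L(\theta_0)\ge C_0\,\pi_{\mathbb P}^2(\theta,\theta_0)$ for every $\theta=(\alpha,\beta)\in\mathbb R\times L^2([0,1])$.
   Context: Model: $y\in\{0,1\}$ and $X\in L^2([0,1])$, with $y\mid X\sim\mathrm{Bernoulli}(F(\alpha_0+\langle X,\beta_0\rangle))$, where $F(t)=e^t/(1+e^t)$, $\langle u,v\rangle=\int_0^1uv$, and $\theta_0=(\alpha_0,\beta_0)$. $w$ is a non-negative bounded weight function. Loss: $d(y,t)=-y\log F(t)-(1-y)\log(1-F(t))$, $\psi=\rho'$, $G(t)=\int_0^t\psi(-\log u)\,du$, and $$\phi(y,t)=\rho(d(y,t))+G(F(t))+G(1-F(t)).$$ Objective and discrepancy: $$L(\theta)=\mathbb E\big(\phi(y,\alpha+\langle X,\beta\rangle)w(X)\big),$$ $$\pi_{\mathbb P}^2(\theta,\theta_0)=\mathbb E\big(w(X)[F(\alpha+\langle X,\beta\rangle)-F(\alpha_0+\langle X,\beta_0\rangle)]^2\big).$$ Assumptions: (A1) $\rho:[0,\infty)\to\mathbb R$ is bounded and continuously differentiable, with bounded derivative $\psi$, and $\rho(0)=0$. (A3) $\psi\ge0$, and there exist $a\ge\log2$ and $A_0>0$ with $\psi(t)>A_0$ for $0<t<a$. *)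

theory Defs
  imports "HOL-Probability.Probability"
begin

definition logF :: "real \<Rightarrow> real" where
  "logF t = exp t / (1 + exp t)"

definition dev :: "real \<Rightarrow> real \<Rightarrow> real" where
  "dev y t = - y * ln (logF t) - (1 - y) * ln (1 - logF t)"

definition Gfun :: "(real \<Rightarrow> real) \<Rightarrow> real \<Rightarrow> real" where
  "Gfun \<psi> t = (LBINT u=0..t. \<psi> (- ln u))"

definition phi :: "(real \<Rightarrow> real) \<Rightarrow> (real \<Rightarrow> real) \<Rightarrow> real \<Rightarrow> real \<Rightarrow> real" where
  "phi \<rho> \<psi> y t = \<rho> (dev y t) + Gfun \<psi> (logF t) + Gfun \<psi> (1 - logF t)"

text \<open>Membership in L^2([0,1]) (functions as representatives).\<close>
definition sq_int :: "(real \<Rightarrow> real) \<Rightarrow> bool" where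
  "sq_int f \<longleftrightarrow> set_borel_measurable lborel {0..1} f
      \<and> set_integrable lborel {0..1} (\<lambda>s. (f s)^2)"

definition ip :: "(real \<Rightarrow> real) \<Rightarrow> (real \<Rightarrow> real) \<Rightarrow> real" where
  "ip u v = (LINT s:{0..1}|lborel. u s * v s)"

text \<open>sigma-algebra generated by the random element X of L^2([0,1]) (generated by
  the continuous linear functionals, which generate the Borel sets of the separable
  Hilbert space L^2).\<close>
definition sigmaX :: "'w measure \<Rightarrow> ('w \<Rightarrow> real \<Rightarrow> real) \<Rightarrow> 'w measure" where
  "sigmaX M X = sigma (space M)
     (\<Union>\<beta>\<in>{\<beta>. sq_int \<beta>}. {(\<lambda>\<omega>. ip (X \<omega>) \<beta>) -` B \<inter> space M | B. B \<in> sets borel})"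

definition Lobj :: "(real \<Rightarrow> real) \<Rightarrow> (real \<Rightarrow> real) \<Rightarrow> 'w measure \<Rightarrow> ((real \<Rightarrow> real) \<Rightarrow> real)
    \<Rightarrow> ('w \<Rightarrow> real \<Rightarrow> real) \<Rightarrow> ('w \<Rightarrow> real) \<Rightarrow> real \<Rightarrow> (real \<Rightarrow> real) \<Rightarrow> real" where
  "Lobj \<rho> \<psi> M w X y \<alpha> \<beta> = (\<integral>\<omega>. phi \<rho> \<psi> (y \<omega>) (\<alpha> + ip (X \<omega>) \<beta>) * w (X \<omega>) \<partial>M)"

definition piP2 :: "'w measure \<Rightarrow> ((real \<Rightarrow> real) \<Rightarrow> real) \<Rightarrow> ('w \<Rightarrow> real \<Rightarrow> real)
    \<Rightarrow> real \<Rightarrow> (real \<Rightarrow> real) \<Rightarrow> real \<Rightarrow> (real \<Rightarrow> real) \<Rightarrow> real" where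
  "piP2 M w X \<alpha> \<beta> \<alpha>0 \<beta>0 =
     (\<integral>\<omega>. w (X \<omega>) * (logF (\<alpha> + ip (X \<omega>) \<beta>) - logF (\<alpha>0 + ip (X \<omega>) \<beta>0))^2 \<partial>M)"

end

theory Submission
  imports Defs
begin

(* Write p = F(alpha0 + <X, beta0>) and q = F(alpha + <X, beta>). Since y is binary with
   P(y = 1 | X) = p, the expected loss given X is w(X) Lambda_p(q), where
     Lambda_p(s) = p rho(-log s) + (1 - p) rho(-log(1 - s)) + G(s) + G(1 - s).
   As G'(s) = psi(-log s), its derivative is
     Lambda_p'(s) = (s - p) (psi(-log s) / s + psi(-log(1 - s)) / (1 - s)).
   One of s, 1 - s is at least 1/2, so one of -log s, -log(1 - s) lies in (0, log 2], where
   psi >= A0 by (A3) since a >= log 2; hence the second factor is at least A0. So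
   Lambda_p(s) - A0/2 (s - p)^2 decreases up to s = p and increases afterwards, giving
   Lambda_p(q) - Lambda_p(p) >= A0/2 (q - p)^2. Integrating against w(X) yields the claim
   with C0 = A0/2. *)

section \<open>The function G\<close>

lemma set_integrable_psi_neg_ln:
  fixes \<psi> :: "real \<Rightarrow> real"
  assumes cont: "continuous_on {0..} \<psi>" and bound: "\<forall>t\<ge>0. \<bar>\<psi> t\<bar> \<le> B"
  shows "set_integrable lborel {0<..<1} (\<lambda>u. \<psi> (- ln u))"
proof -
  have "continuous_on {0<..<1::real} (\<lambda>u. \<psi> (- ln u))"
    by (rule continuous_on_compose2[OF cont]) (auto intro!: continuous_intros)
  then have "set_borel_measurable lborel {0<..<1} (\<lambda>u. \<psi> (- ln u))"
    unfolding set_borel_measurable_def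
    using borel_measurable_continuous_on_indicator[of "{0<..<1::real}"] by fastforce
  moreover have "\<bar>\<psi> (- ln u)\<bar> \<le> B" if "u \<in> {0<..<1}" for u
    using bound that by simp
  ultimately show ?thesis
    unfolding set_integrable_def set_borel_measurable_def
    by (intro integrableI_bounded_set[where A="{0<..<1}" and B=B]) (auto simp: indicator_def)
qed

lemma Gfun_eq_set_integral:
  assumes "0 \<le> s"
  shows "Gfun \<psi> s = (LINT u:{0<..<s}|lborel. \<psi> (- ln u))"
  unfolding Gfun_def using interval_integral_Ioo[of 0 "ereal s"] assms
  by (simp add: zero_ereal_def)

lemma abs_Gfun_le:
  fixes \<psi> :: "real \<Rightarrow> real"
  assumes cont: "continuous_on {0..} \<psi>" and bound: "\<forall>t\<ge>0. \<bar>\<psi> t\<bar> \<le> B"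
    and s: "0 \<le> s" "s \<le> 1"
  shows "\<bar>Gfun \<psi> s\<bar> \<le> B"
proof -
  have int: "set_integrable lborel {0<..<s} (\<lambda>u. \<psi> (- ln u))"
    by (rule set_integrable_subset[OF set_integrable_psi_neg_ln[OF cont bound]]) (use s in auto)
  have "\<bar>Gfun \<psi> s\<bar> \<le> (LINT u:{0<..<s}|lborel. \<bar>\<psi> (- ln u)\<bar>)"
    using set_integral_norm_bound[OF int] s by (simp add: Gfun_eq_set_integral)
  also have "\<dots> \<le> (LINT u:{0<..<s}|lborel. B)"
    using bound s
    by (intro set_integral_mono set_integrable_abs int)
       (auto simp: set_integrable_def intro!: integrableI_bounded_set_indicator[where B="\<bar>B\<bar>"])
  also have "\<dots> = s * B"
    using s by (simp add: set_integral_const)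
  also have "\<dots> \<le> B"
    using s bound[rule_format, of 0] by (simp add: mult_left_le_one_le)
  finally show ?thesis .
qed

lemma Gfun_eq_add:
  fixes \<psi> :: "real \<Rightarrow> real"
  assumes cont: "continuous_on {0..} \<psi>" and bound: "\<forall>t\<ge>0. \<bar>\<psi> t\<bar> \<le> B"
    and u: "0 < u" "u < 1"
  shows "Gfun \<psi> u = Gfun \<psi> (1/2) + (LBINT v=ereal (1/2)..ereal u. \<psi> (- ln v))"
proof -
  define c where "c = max (1/2) u"
  have "set_integrable lborel {0<..<c} (\<lambda>v. \<psi> (- ln v))"
    by (rule set_integrable_subset[OF set_integrable_psi_neg_ln[OF cont bound]])
       (use u in \<open>auto simp: c_def\<close>)
  moreover have "einterval (ereal 0) (ereal c) = {0<..<c}" "0 \<le> c"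
    by (auto simp: einterval_def) (simp add: c_def)
  ultimately have "interval_lebesgue_integrable lborel (ereal 0) (ereal c) (\<lambda>v. \<psi> (- ln v))"
    unfolding interval_lebesgue_integrable_def by simp
  moreover have "min (ereal 0) (min (ereal (1/2)) (ereal u)) = ereal 0"
    "max (ereal 0) (max (ereal (1/2)) (ereal u)) = ereal c"
    using u by (auto simp: c_def max_def min_def)
  ultimately have "interval_lebesgue_integrable lborel
      (min (ereal 0) (min (ereal (1/2)) (ereal u))) (max (ereal 0) (max (ereal (1/2)) (ereal u)))
      (\<lambda>v. \<psi> (- ln v))"
    by simp
  from interval_integral_sum[OF this] show ?thesis
    unfolding Gfun_def by (simp add: zero_ereal_def)
qed

lemma Gfun_has_real_derivative:
  fixes \<psi> :: "real \<Rightarrow> real"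
  assumes cont: "continuous_on {0..} \<psi>" and bound: "\<forall>t\<ge>0. \<bar>\<psi> t\<bar> \<le> B"
    and x: "0 < x" "x < 1"
  shows "(Gfun \<psi> has_real_derivative \<psi> (- ln x)) (at x)"
proof -
  define a where "a = min x (1/2) / 2"
  define b where "b = (1 + max x (1/2)) / 2"
  have ab: "0 < a" "a < x" "x < b" "b < 1" "a \<le> 1/2" "1/2 \<le> b"
    using x by (auto simp: a_def b_def)
  have cont_ab: "continuous_on {a..b} (\<lambda>v. \<psi> (- ln v))"
    by (rule continuous_on_compose2[OF cont]) (use ab in \<open>auto intro!: continuous_intros\<close>)
  have "((\<lambda>u. LBINT v=ereal (1/2)..ereal u. \<psi> (- ln v)) has_vector_derivative \<psi> (- ln x))
      (at x within {a..b})"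
    by (rule interval_integral_FTC2[OF _ _ cont_ab]) (use ab in auto)
  then have "((\<lambda>u. Gfun \<psi> (1/2) + (LBINT v=ereal (1/2)..ereal u. \<psi> (- ln v)))
      has_real_derivative \<psi> (- ln x)) (at x)"
    using at_within_Icc_at[of a x b] ab
    by (auto simp: has_real_derivative_iff_has_vector_derivative intro!: derivative_eq_intros)
  then show ?thesis
  proof (rule has_field_derivative_transform_within_open[where S="{a<..<b}"])
    show "Gfun \<psi> (1/2) + (LBINT v=ereal (1/2)..ereal u. \<psi> (- ln v)) = Gfun \<psi> u"
      if "u \<in> {a<..<b}" for u
      using Gfun_eq_add[OF cont bound, of u] that ab by simp
  qed (use ab in auto)
qed

section \<open>The loss and the conditional risk\<close>

lemma logF_pos: "0 < logF t"
  and logF_less_1: "logF t < 1"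
  unfolding logF_def by (simp_all add: add_pos_pos)

lemma isCont_logF: "isCont logF t"
  unfolding logF_def using exp_gt_zero[of t] by (intro continuous_intros) linarith

lemma borel_measurable_logF [measurable]: "logF \<in> borel_measurable borel"
  by (intro borel_measurable_continuous_onI continuous_at_imp_continuous_on ballI isCont_logF)

lemma dev_nonneg:
  assumes "0 \<le> yv" "yv \<le> 1"
  shows "0 \<le> dev yv t"
proof -
  have "ln (logF t) \<le> 0" "ln (1 - logF t) \<le> 0"
    using logF_pos[of t] logF_less_1[of t] by simp_all
  then have "0 \<le> yv * - ln (logF t)" "0 \<le> (1 - yv) * - ln (1 - logF t)"
    using assms by (simp_all add: mult_nonneg_nonpos)
  then show ?thesis
    unfolding dev_def by linarith
qed

definition cond_risk :: "(real \<Rightarrow> real) \<Rightarrow> (real \<Rightarrow> real) \<Rightarrow> real \<Rightarrow> real \<Rightarrow> real" where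
  "cond_risk \<rho> \<psi> p s = p * \<rho> (- ln s) + (1 - p) * \<rho> (- ln (1 - s)) + Gfun \<psi> s + Gfun \<psi> (1 - s)"

lemma cond_risk_logF:
  "p * phi \<rho> \<psi> 1 t + (1 - p) * phi \<rho> \<psi> 0 t = cond_risk \<rho> \<psi> p (logF t)"
  unfolding phi_def cond_risk_def dev_def by (simp add: algebra_simps)

lemma continuous_on_phi:
  fixes \<rho> \<psi> :: "real \<Rightarrow> real"
  assumes cont_\<rho>: "continuous_on {0..} \<rho>"
    and cont_\<psi>: "continuous_on {0..} \<psi>" and bound_\<psi>: "\<forall>t\<ge>0. \<bar>\<psi> t\<bar> \<le> B"
    and yv: "0 \<le> yv" "yv \<le> 1"
  shows "continuous_on UNIV (phi \<rho> \<psi> yv)"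
proof -
  have "isCont (dev yv) t" for t
    unfolding dev_def
    by (intro continuous_intros isCont_logF) (use logF_pos[of t] logF_less_1[of t] in linarith)+
  then have "continuous_on UNIV (dev yv)"
    by (simp add: continuous_at_imp_continuous_on)
  then have "continuous_on UNIV (\<lambda>t. \<rho> (dev yv t))"
    by (rule continuous_on_compose2[OF cont_\<rho>]) (use dev_nonneg[OF yv] in auto)
  moreover have cont_G: "continuous_on {0<..<1} (Gfun \<psi>)"
    by (rule DERIV_continuous_on, rule has_field_derivative_at_within,
        rule Gfun_has_real_derivative[OF cont_\<psi> bound_\<psi>]) auto
  have "continuous_on UNIV logF" "continuous_on UNIV (\<lambda>t. 1 - logF t)"
    by (intro continuous_at_imp_continuous_on ballI continuous_intros isCont_logF)+
  then have "continuous_on UNIV (\<lambda>t. Gfun \<psi> (logF t))"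
    and "continuous_on UNIV (\<lambda>t. Gfun \<psi> (1 - logF t))"
    using logF_pos logF_less_1 by (auto intro!: continuous_on_compose2[OF cont_G])
  ultimately show ?thesis
    unfolding phi_def by (intro continuous_intros)
qed

lemma abs_phi_le:
  fixes \<rho> \<psi> :: "real \<Rightarrow> real"
  assumes bound_\<rho>: "\<forall>x\<ge>0. \<bar>\<rho> x\<bar> \<le> R"
    and cont_\<psi>: "continuous_on {0..} \<psi>" and bound_\<psi>: "\<forall>t\<ge>0. \<bar>\<psi> t\<bar> \<le> B"
    and yv: "0 \<le> yv" "yv \<le> 1"
  shows "\<bar>phi \<rho> \<psi> yv t\<bar> \<le> R + 2 * B"
proof -
  have "\<bar>\<rho> (dev yv t)\<bar> \<le> R"
    using bound_\<rho> dev_nonneg[OF yv] by blast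
  moreover have "\<bar>Gfun \<psi> (logF t)\<bar> \<le> B" "\<bar>Gfun \<psi> (1 - logF t)\<bar> \<le> B"
    using logF_pos[of t] logF_less_1[of t]
    by (intro abs_Gfun_le[OF cont_\<psi> bound_\<psi>]; linarith)+
  ultimately show ?thesis
    unfolding phi_def by linarith
qed

section \<open>Quadratic growth of the conditional risk\<close>

(* (A3) bounds psi only on (0, a), which misses -ln u = ln 2 when a = ln 2; continuity covers it. *)
lemma psi_neg_ln_ge:
  fixes \<psi> :: "real \<Rightarrow> real"
  assumes cont: "continuous_on {0..} \<psi>" and a: "ln 2 \<le> a"
    and A0: "\<forall>t. 0 < t \<and> t < a \<longrightarrow> A0 < \<psi> t"
    and u: "1/2 \<le> u" "u \<le> 1"
  shows "A0 \<le> \<psi> (- ln u)"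
proof -
  have "0 < a"
    using a ln_gt_zero[of 2] by linarith
  then have closure: "closure {0<..<a} = {0..a}"
    by simp
  have "ln (1/2) \<le> ln u"
    using u by simp
  then have "- ln u \<in> closure {0<..<a}"
    unfolding closure using u a by (auto simp: ln_div)
  moreover have "continuous_on (closure {0<..<a}) \<psi>"
    unfolding closure by (rule continuous_on_subset[OF cont]) auto
  ultimately show ?thesis
    by (intro continuous_ge_on_closure[of "{0<..<a}" \<psi> "- ln u" A0])
       (use A0 in \<open>auto intro: less_imp_le\<close>)
qed

lemma psi_weighted_sum_ge:
  fixes \<psi> :: "real \<Rightarrow> real"
  assumes cont: "continuous_on {0..} \<psi>" and nonneg: "\<forall>t\<ge>0. 0 \<le> \<psi> t"
    and a: "ln 2 \<le> a" and A0: "\<forall>t. 0 < t \<and> t < a \<longrightarrow> A0 < \<psi> t"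
    and s: "0 < s" "s < 1"
  shows "A0 \<le> \<psi> (- ln s) / s + \<psi> (- ln (1 - s)) / (1 - s)"
proof -
  have "0 \<le> \<psi> (- ln s)" "0 \<le> \<psi> (- ln (1 - s))"
    using nonneg s by simp_all
  then have "0 \<le> \<psi> (- ln s) / s" "0 \<le> \<psi> (- ln (1 - s)) / (1 - s)"
    and "\<psi> (- ln s) \<le> \<psi> (- ln s) / s" "\<psi> (- ln (1 - s)) \<le> \<psi> (- ln (1 - s)) / (1 - s)"
    using s by (simp_all add: le_divide_eq mult_right_le_one_le)
  moreover have "A0 \<le> \<psi> (- ln s) \<or> A0 \<le> \<psi> (- ln (1 - s))"
    using psi_neg_ln_ge[OF cont a A0, of s] psi_neg_ln_ge[OF cont a A0, of "1 - s"] s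
    by (cases "1/2 \<le> s") auto
  ultimately show ?thesis
    by linarith
qed

lemma has_real_derivative_at_of_within_Ici:
  assumes "(f has_real_derivative D) (at t within {0..})" and "0 < t"
  shows "(f has_real_derivative D) (at t)"
proof -
  have "at t within {0..} = at t"
    using \<open>0 < t\<close> by (intro at_within_interior) simp
  with assms(1) show ?thesis
    by simp
qed

lemma cond_risk_has_real_derivative:
  fixes \<rho> \<psi> :: "real \<Rightarrow> real"
  assumes deriv_\<rho>: "\<forall>t>0. (\<rho> has_real_derivative \<psi> t) (at t)"
    and cont: "continuous_on {0..} \<psi>" and bound: "\<forall>t\<ge>0. \<bar>\<psi> t\<bar> \<le> B"
    and s: "0 < s" "s < 1"
  shows "(cond_risk \<rho> \<psi> p has_real_derivative
           (s - p) * (\<psi> (- ln s) / s + \<psi> (- ln (1 - s)) / (1 - s))) (at s)"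
proof -
  have "((\<lambda>s. \<rho> (- ln s)) has_real_derivative \<psi> (- ln s) * - (1 / s)) (at s)"
    by (rule DERIV_chain2[OF deriv_\<rho>[rule_format]])
       (use s in \<open>auto intro!: derivative_eq_intros\<close>)
  moreover have "((\<lambda>s. \<rho> (- ln (1 - s))) has_real_derivative \<psi> (- ln (1 - s)) * (1 / (1 - s))) (at s)"
    by (rule DERIV_chain2[OF deriv_\<rho>[rule_format]])
       (use s in \<open>auto intro!: derivative_eq_intros simp: field_simps\<close>)
  moreover have "((\<lambda>s. Gfun \<psi> (1 - s)) has_real_derivative \<psi> (- ln (1 - s)) * - 1) (at s)"
    by (rule DERIV_chain2[OF Gfun_has_real_derivative[OF cont bound]])
       (use s in \<open>auto intro!: derivative_eq_intros\<close>)
  ultimately have "(cond_risk \<rho> \<psi> p has_real_derivative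
      p * (\<psi> (- ln s) * - (1 / s)) + (1 - p) * (\<psi> (- ln (1 - s)) * (1 / (1 - s)))
      + \<psi> (- ln s) + \<psi> (- ln (1 - s)) * - 1) (at s)"
    unfolding cond_risk_def
    by (intro DERIV_add DERIV_cmult Gfun_has_real_derivative[OF cont bound s])
  moreover have "p * (\<psi> (- ln s) * - (1 / s)) + (1 - p) * (\<psi> (- ln (1 - s)) * (1 / (1 - s)))
      + \<psi> (- ln s) + \<psi> (- ln (1 - s)) * - 1
      = (s - p) * (\<psi> (- ln s) / s + \<psi> (- ln (1 - s)) / (1 - s))"
    using s by (simp add: field_simps)
  ultimately show ?thesis
    by simp
qed

lemma cond_risk_quadratic_growth:
  fixes \<rho> \<psi> :: "real \<Rightarrow> real"
  assumes deriv_\<rho>: "\<forall>t>0. (\<rho> has_real_derivative \<psi> t) (at t)"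
    and cont: "continuous_on {0..} \<psi>" and bound: "\<forall>t\<ge>0. \<bar>\<psi> t\<bar> \<le> B"
    and nonneg: "\<forall>t\<ge>0. 0 \<le> \<psi> t"
    and a: "ln 2 \<le> a" and A0: "\<forall>t. 0 < t \<and> t < a \<longrightarrow> A0 < \<psi> t"
    and p: "0 < p" "p < 1" and q: "0 < q" "q < 1"
  shows "A0 / 2 * (q - p)\<^sup>2 \<le> cond_risk \<rho> \<psi> p q - cond_risk \<rho> \<psi> p p"
proof -
  define K where "K s = \<psi> (- ln s) / s + \<psi> (- ln (1 - s)) / (1 - s)" for s
  define g where "g s = cond_risk \<rho> \<psi> p s - A0 / 2 * (s - p)\<^sup>2" for s
  have g': "(g has_real_derivative (s - p) * (K s - A0)) (at s)"
    and K: "A0 \<le> K s" if "0 < s" "s < 1" for s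
  proof -
    have "((\<lambda>s. A0 / 2 * (s - p)\<^sup>2) has_real_derivative A0 * (s - p)) (at s)"
      by (auto intro!: derivative_eq_intros)
    from DERIV_diff[OF cond_risk_has_real_derivative[OF deriv_\<rho> cont bound that] this]
    show "(g has_real_derivative (s - p) * (K s - A0)) (at s)"
      unfolding g_def K_def by (simp add: algebra_simps)
    show "A0 \<le> K s"
      unfolding K_def by (rule psi_weighted_sum_ge[OF cont nonneg a A0 that])
  qed
  have "g p \<le> g q"
  proof (cases "p \<le> q")
    case True
    show ?thesis
    proof (rule DERIV_nonneg_imp_nondecreasing[OF True])
      fix s assume "p \<le> s" "s \<le> q"
      with p q g'[of s] K[of s] show "\<exists>D. (g has_real_derivative D) (at s) \<and> 0 \<le> D"
        by force
    qed
  next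
    case False
    show ?thesis
    proof (rule DERIV_nonpos_imp_nonincreasing[of q p g])
      show "q \<le> p"
        using False by simp
      fix s assume "q \<le> s" "s \<le> p"
      with p q g'[of s] K[of s] show "\<exists>D. (g has_real_derivative D) (at s) \<and> D \<le> 0"
        by (force intro: mult_nonpos_nonneg)
    qed
  qed
  then show ?thesis
    unfolding g_def by simp
qed

section \<open>Conditioning on X\<close>

lemma space_sigmaX [simp]: "space (sigmaX M X) = space M"
  unfolding sigmaX_def by (rule space_measure_of) auto

lemma measurable_sigmaX_ip:
  assumes "sq_int \<beta>"
  shows "(\<lambda>\<omega>. ip (X \<omega>) \<beta>) \<in> borel_measurable (sigmaX M X)"
proof (rule measurableI)
  fix B :: "real set"
  assume "B \<in> sets borel"
  with assms have "(\<lambda>\<omega>. ip (X \<omega>) \<beta>) -` B \<inter> space M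
      \<in> (\<Union>\<beta>\<in>{\<beta>. sq_int \<beta>}. {(\<lambda>\<omega>. ip (X \<omega>) \<beta>) -` B \<inter> space M | B. B \<in> sets borel})"
    by blast
  then show "(\<lambda>\<omega>. ip (X \<omega>) \<beta>) -` B \<inter> space (sigmaX M X) \<in> sets (sigmaX M X)"
    unfolding space_sigmaX unfolding sigmaX_def
    by (subst sets_measure_of) (auto intro: sigma_sets.Basic)
qed simp

lemma subalgebra_sigmaX:
  assumes "\<forall>\<beta>. sq_int \<beta> \<longrightarrow> (\<lambda>\<omega>. ip (X \<omega>) \<beta>) \<in> borel_measurable M"
  shows "subalgebra M (sigmaX M X)"
  unfolding subalgebra_def sigmaX_def
  using assms by (auto intro!: sets.sigma_sets_subset simp: sets_measure_of_conv measurable_sets)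

lemma integral_mult_eq_if_set_integrals_eq:
  fixes y p Z :: "'a \<Rightarrow> real"
  assumes "finite_measure M" and F: "subalgebra M F"
    and y: "integrable M y" and p: "integrable M p" "p \<in> borel_measurable F"
    and set_integrals: "\<forall>A\<in>sets F. (\<integral>\<omega>. indicator A \<omega> * y \<omega> \<partial>M) = (\<integral>\<omega>. indicator A \<omega> * p \<omega> \<partial>M)"
    and Z: "Z \<in> borel_measurable F" "integrable M (\<lambda>\<omega>. Z \<omega> * y \<omega>)"
  shows "(\<integral>\<omega>. Z \<omega> * y \<omega> \<partial>M) = (\<integral>\<omega>. Z \<omega> * p \<omega> \<partial>M)"
proof -
  interpret sigma_finite_subalgebra M F
    by (intro finite_measure_subalgebra_is_sigma_finite)
       (use assms(1) F in \<open>simp add: finite_measure_subalgebra_def finite_measure_subalgebra_axioms_def\<close>)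
  have "AE \<omega> in M. real_cond_exp M F y \<omega> = p \<omega>"
    by (rule real_cond_exp_charact[OF _ y p]) (use set_integrals in \<open>simp add: set_lebesgue_integral_def\<close>)
  then have "(\<integral>\<omega>. Z \<omega> * real_cond_exp M F y \<omega> \<partial>M) = (\<integral>\<omega>. Z \<omega> * p \<omega> \<partial>M)"
    using Z p F by (intro integral_cong_AE) (auto simp: measurable_from_subalg)
  then show ?thesis
    using real_cond_exp_intg(2)[OF Z(2,1) borel_measurable_integrable[OF y]] by simp
qed

lemma integral_mixture_eq_if_set_integrals_eq:
  fixes y p g0 g1 :: "'a \<Rightarrow> real"
  assumes M: "prob_space M" and F: "subalgebra M F"
    and y: "y \<in> borel_measurable M" "\<forall>\<omega>\<in>space M. \<bar>y \<omega>\<bar> \<le> 1"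
    and p: "p \<in> borel_measurable F" "\<forall>\<omega>\<in>space M. \<bar>p \<omega>\<bar> \<le> 1"
    and set_integrals: "\<forall>A\<in>sets F. (\<integral>\<omega>. indicator A \<omega> * y \<omega> \<partial>M) = (\<integral>\<omega>. indicator A \<omega> * p \<omega> \<partial>M)"
    and g: "g0 \<in> borel_measurable F" "g1 \<in> borel_measurable F"
      "\<forall>\<omega>\<in>space M. \<bar>g0 \<omega>\<bar> \<le> K" "\<forall>\<omega>\<in>space M. \<bar>g1 \<omega>\<bar> \<le> K"
  shows "integrable M (\<lambda>\<omega>. p \<omega> * g1 \<omega> + (1 - p \<omega>) * g0 \<omega>)"
    and "(\<integral>\<omega>. y \<omega> * g1 \<omega> + (1 - y \<omega>) * g0 \<omega> \<partial>M)
       = (\<integral>\<omega>. p \<omega> * g1 \<omega> + (1 - p \<omega>) * g0 \<omega> \<partial>M)"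
proof -
  interpret prob_space M
    by (rule M)
  have bounded_integrable: "integrable M f"
    if "f \<in> borel_measurable M" "\<forall>\<omega>\<in>space M. \<bar>f \<omega>\<bar> \<le> C" for f :: "'a \<Rightarrow> real" and C
    using that by (intro integrable_const_bound[where B=C]) auto
  have [measurable]: "p \<in> borel_measurable M" "g0 \<in> borel_measurable M" "g1 \<in> borel_measurable M"
    using p g F by (auto simp: measurable_from_subalg)
  have diff_bound: "\<forall>\<omega>\<in>space M. \<bar>g1 \<omega> - g0 \<omega>\<bar> \<le> 2 * K"
  proof
    fix \<omega> assume "\<omega> \<in> space M"
    then have "\<bar>g0 \<omega>\<bar> \<le> K" "\<bar>g1 \<omega>\<bar> \<le> K"
      using g by auto
    then show "\<bar>g1 \<omega> - g0 \<omega>\<bar> \<le> 2 * K"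
      by linarith
  qed
  have int_g0: "integrable M g0"
    using g by (intro bounded_integrable) auto
  have int_diff: "integrable M (\<lambda>\<omega>. (g1 \<omega> - g0 \<omega>) * q \<omega>)"
    if "q \<in> borel_measurable M" "\<forall>\<omega>\<in>space M. \<bar>q \<omega>\<bar> \<le> 1" for q
  proof (rule bounded_integrable[of _ "2 * K"])
    show "\<forall>\<omega>\<in>space M. \<bar>(g1 \<omega> - g0 \<omega>) * q \<omega>\<bar> \<le> 2 * K"
      using that(2) diff_bound
      by (auto simp: abs_mult intro!: order_trans[OF mult_right_le_one_le])
  qed (use that in simp)
  have "integrable M (\<lambda>\<omega>. g0 \<omega> + (g1 \<omega> - g0 \<omega>) * p \<omega>)"
    using int_g0 int_diff p by simp
  then show "integrable M (\<lambda>\<omega>. p \<omega> * g1 \<omega> + (1 - p \<omega>) * g0 \<omega>)"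
    by (simp add: algebra_simps)
  have "(\<integral>\<omega>. (g1 \<omega> - g0 \<omega>) * y \<omega> \<partial>M) = (\<integral>\<omega>. (g1 \<omega> - g0 \<omega>) * p \<omega> \<partial>M)"
    using y p g
    by (intro integral_mult_eq_if_set_integrals_eq[OF _ F _ _ _ set_integrals] int_diff
        bounded_integrable) (auto simp: finite_measure_axioms)
  then have "(\<integral>\<omega>. g0 \<omega> + (g1 \<omega> - g0 \<omega>) * y \<omega> \<partial>M)
      = (\<integral>\<omega>. g0 \<omega> + (g1 \<omega> - g0 \<omega>) * p \<omega> \<partial>M)"
    using int_g0 int_diff y p by simp
  then show "(\<integral>\<omega>. y \<omega> * g1 \<omega> + (1 - y \<omega>) * g0 \<omega> \<partial>M)
       = (\<integral>\<omega>. p \<omega> * g1 \<omega> + (1 - p \<omega>) * g0 \<omega> \<partial>M)"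
    by (simp add: algebra_simps)
qed

lemma Lobj_eq_integral_cond_risk:
  fixes M :: "'w measure" and X :: "'w \<Rightarrow> real \<Rightarrow> real" and y :: "'w \<Rightarrow> real"
    and w :: "(real \<Rightarrow> real) \<Rightarrow> real" and \<rho> \<psi> :: "real \<Rightarrow> real"
  assumes M: "prob_space M"
    and X_meas: "\<forall>\<beta>. sq_int \<beta> \<longrightarrow> (\<lambda>\<omega>. ip (X \<omega>) \<beta>) \<in> borel_measurable M"
    and y_meas: "y \<in> borel_measurable M" and y_01: "\<forall>\<omega>\<in>space M. y \<omega> \<in> {0, 1}"
    and beta0: "sq_int \<beta>0"
    and model: "\<forall>A\<in>sets (sigmaX M X).
        (\<integral>\<omega>. indicator A \<omega> * y \<omega> \<partial>M) = (\<integral>\<omega>. indicator A \<omega> * logF (\<alpha>0 + ip (X \<omega>) \<beta>0) \<partial>M)"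
    and w_meas: "(\<lambda>\<omega>. w (X \<omega>)) \<in> borel_measurable (sigmaX M X)"
    and w_bound: "\<forall>f. \<bar>w f\<bar> \<le> W"
    and cont_\<rho>: "continuous_on {0..} \<rho>" and bound_\<rho>: "\<forall>x\<ge>0. \<bar>\<rho> x\<bar> \<le> R"
    and cont_\<psi>: "continuous_on {0..} \<psi>" and bound_\<psi>: "\<forall>t\<ge>0. \<bar>\<psi> t\<bar> \<le> B"
    and beta: "sq_int \<beta>"
  shows "integrable M
           (\<lambda>\<omega>. w (X \<omega>) * cond_risk \<rho> \<psi> (logF (\<alpha>0 + ip (X \<omega>) \<beta>0)) (logF (\<alpha> + ip (X \<omega>) \<beta>)))"
    and "Lobj \<rho> \<psi> M w X y \<alpha> \<beta>
           = (\<integral>\<omega>. w (X \<omega>) * cond_risk \<rho> \<psi> (logF (\<alpha>0 + ip (X \<omega>) \<beta>0)) (logF (\<alpha> + ip (X \<omega>) \<beta>)) \<partial>M)"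
proof -
  interpret prob_space M
    by (rule M)
  define p where "p \<omega> = logF (\<alpha>0 + ip (X \<omega>) \<beta>0)" for \<omega>
  define g where "g i \<omega> = w (X \<omega>) * phi \<rho> \<psi> i (\<alpha> + ip (X \<omega>) \<beta>)" for i \<omega>
  have F: "subalgebra M (sigmaX M X)"
    by (rule subalgebra_sigmaX[OF X_meas])
  note measurable_sigmaX_ip[OF beta0, measurable] measurable_sigmaX_ip[OF beta, measurable]
    w_meas[measurable]
  have [measurable]: "phi \<rho> \<psi> 0 \<in> borel_measurable borel" "phi \<rho> \<psi> 1 \<in> borel_measurable borel"
    by (intro borel_measurable_continuous_onI continuous_on_phi[OF cont_\<rho> cont_\<psi> bound_\<psi>]; simp)+
  have p_meas: "p \<in> borel_measurable (sigmaX M X)"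
    and g_meas: "g 0 \<in> borel_measurable (sigmaX M X)" "g 1 \<in> borel_measurable (sigmaX M X)"
    unfolding p_def g_def by measurable
  have g_bound: "\<forall>\<omega>\<in>space M. \<bar>g i \<omega>\<bar> \<le> W * (R + 2 * B)" if "i \<in> {0, 1}" for i
  proof
    fix \<omega>
    have "\<bar>phi \<rho> \<psi> i (\<alpha> + ip (X \<omega>) \<beta>)\<bar> \<le> R + 2 * B"
      using that by (intro abs_phi_le[OF bound_\<rho> cont_\<psi> bound_\<psi>]) auto
    then show "\<bar>g i \<omega>\<bar> \<le> W * (R + 2 * B)"
      unfolding g_def abs_mult using w_bound by (intro mult_mono) auto
  qed
  have mixture: "integrable M (\<lambda>\<omega>. p \<omega> * g 1 \<omega> + (1 - p \<omega>) * g 0 \<omega>)"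
    "(\<integral>\<omega>. y \<omega> * g 1 \<omega> + (1 - y \<omega>) * g 0 \<omega> \<partial>M)
       = (\<integral>\<omega>. p \<omega> * g 1 \<omega> + (1 - p \<omega>) * g 0 \<omega> \<partial>M)"
    using logF_pos logF_less_1 model g_bound[of 0] g_bound[of 1]
    by (intro integral_mixture_eq_if_set_integrals_eq[OF M F y_meas _ p_meas _ _ g_meas];
        use y_01 in \<open>force simp: p_def abs_le_iff less_imp_le\<close>)+
  have cond_risk_eq: "w (X \<omega>) * cond_risk \<rho> \<psi> (p \<omega>) (logF (\<alpha> + ip (X \<omega>) \<beta>))
      = p \<omega> * g 1 \<omega> + (1 - p \<omega>) * g 0 \<omega>" for \<omega>
    by (simp add: g_def cond_risk_logF[symmetric] algebra_simps)
  show "integrable M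
           (\<lambda>\<omega>. w (X \<omega>) * cond_risk \<rho> \<psi> (logF (\<alpha>0 + ip (X \<omega>) \<beta>0)) (logF (\<alpha> + ip (X \<omega>) \<beta>)))"
    using mixture(1) by (simp add: cond_risk_eq[unfolded p_def] p_def)
  have "Lobj \<rho> \<psi> M w X y \<alpha> \<beta> = (\<integral>\<omega>. y \<omega> * g 1 \<omega> + (1 - y \<omega>) * g 0 \<omega> \<partial>M)"
    unfolding Lobj_def g_def using y_01
    by (intro Bochner_Integration.integral_cong refl) auto
  then show "Lobj \<rho> \<psi> M w X y \<alpha> \<beta>
           = (\<integral>\<omega>. w (X \<omega>) * cond_risk \<rho> \<psi> (logF (\<alpha>0 + ip (X \<omega>) \<beta>0)) (logF (\<alpha> + ip (X \<omega>) \<beta>)) \<partial>M)"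
    using mixture(2) by (simp add: cond_risk_eq[unfolded p_def] p_def)
qed

theorem lemmaA3:
  fixes M :: "'w measure" and X :: "'w \<Rightarrow> real \<Rightarrow> real" and y :: "'w \<Rightarrow> real"
    and w :: "(real \<Rightarrow> real) \<Rightarrow> real" and \<rho> \<psi> :: "real \<Rightarrow> real"
    and \<alpha>0 :: real and \<beta>0 :: "real \<Rightarrow> real"
  assumes M: "prob_space M"
    and X_L2: "\<forall>\<omega>\<in>space M. sq_int (X \<omega>)"
    and X_meas: "\<forall>\<beta>. sq_int \<beta> \<longrightarrow> (\<lambda>\<omega>. ip (X \<omega>) \<beta>) \<in> borel_measurable M"
    and y_meas: "y \<in> borel_measurable M"
    and y_01: "\<forall>\<omega>\<in>space M. y \<omega> \<in> {0, 1}"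
    and beta0: "sq_int \<beta>0"
    and model: "\<forall>A\<in>sets (sigmaX M X).
        (\<integral>\<omega>. indicator A \<omega> * y \<omega> \<partial>M) = (\<integral>\<omega>. indicator A \<omega> * logF (\<alpha>0 + ip (X \<omega>) \<beta>0) \<partial>M)"
    and w_nonneg: "\<forall>f. 0 \<le> w f"
    and w_bdd: "bounded (range w)"
    and w_meas: "(\<lambda>\<omega>. w (X \<omega>)) \<in> borel_measurable (sigmaX M X)"
    and A1_deriv: "\<forall>t\<ge>0. (\<rho> has_real_derivative \<psi> t) (at t within {0..})"
    and A1_cont: "continuous_on {0..} \<psi>"
    and A1_bdd: "bounded (\<rho> ` {0..})"
    and A1_bdd': "bounded (\<psi> ` {0..})"
    and A1_zero: "\<rho> 0 = 0"
    and A3_nonneg: "\<forall>t\<ge>0. 0 \<le> \<psi> t"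
    and A3: "\<exists>a A0. a \<ge> ln 2 \<and> A0 > 0 \<and> (\<forall>t. 0 < t \<and> t < a \<longrightarrow> \<psi> t > A0)"
  shows "\<exists>C0>0. \<forall>\<alpha> \<beta>. sq_int \<beta> \<longrightarrow>
           Lobj \<rho> \<psi> M w X y \<alpha> \<beta> - Lobj \<rho> \<psi> M w X y \<alpha>0 \<beta>0
             \<ge> C0 * piP2 M w X \<alpha> \<beta> \<alpha>0 \<beta>0"
proof -
  obtain a A0 where a: "ln 2 \<le> a" and A0: "0 < A0" "\<forall>t. 0 < t \<and> t < a \<longrightarrow> A0 < \<psi> t"
    using A3 by auto
  obtain B R W where B: "\<forall>t\<ge>0. \<bar>\<psi> t\<bar> \<le> B" and R: "\<forall>x\<ge>0. \<bar>\<rho> x\<bar> \<le> R"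
    and W: "\<forall>f. \<bar>w f\<bar> \<le> W"
    using A1_bdd' A1_bdd w_bdd by (force simp: bounded_iff)
  have cont_\<rho>: "continuous_on {0..} \<rho>"
    using A1_deriv by (intro DERIV_continuous_on) auto
  have deriv_\<rho>: "\<forall>t>0. (\<rho> has_real_derivative \<psi> t) (at t)"
    using A1_deriv by (auto intro: has_real_derivative_at_of_within_Ici)
  note risk = Lobj_eq_integral_cond_risk[OF M X_meas y_meas y_01 beta0 model w_meas W
      cont_\<rho> R A1_cont B]
  show ?thesis
  proof (intro exI[of _ "A0 / 2"] conjI allI impI)
    fix \<alpha> :: real and \<beta> :: "real \<Rightarrow> real"
    assume beta: "sq_int \<beta>"
    define p where "p \<omega> = logF (\<alpha>0 + ip (X \<omega>) \<beta>0)" for \<omega>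
    define q where "q \<omega> = logF (\<alpha> + ip (X \<omega>) \<beta>)" for \<omega>
    have growth: "w (X \<omega>) * (A0 / 2 * (q \<omega> - p \<omega>)\<^sup>2)
        \<le> w (X \<omega>) * (cond_risk \<rho> \<psi> (p \<omega>) (q \<omega>) - cond_risk \<rho> \<psi> (p \<omega>) (p \<omega>))" for \<omega>
      unfolding p_def q_def using w_nonneg
      by (intro mult_left_mono cond_risk_quadratic_growth[OF deriv_\<rho> A1_cont B A3_nonneg a A0(2)]
          logF_pos logF_less_1) auto
    have "A0 / 2 * piP2 M w X \<alpha> \<beta> \<alpha>0 \<beta>0 = (\<integral>\<omega>. w (X \<omega>) * (A0 / 2 * (q \<omega> - p \<omega>)\<^sup>2) \<partial>M)"
      unfolding piP2_def p_def q_def by (simp add: ac_simps)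
    also have "\<dots> \<le> (\<integral>\<omega>. w (X \<omega>) * (cond_risk \<rho> \<psi> (p \<omega>) (q \<omega>) - cond_risk \<rho> \<psi> (p \<omega>) (p \<omega>)) \<partial>M)"
    proof (rule integral_mono'[OF _ growth])
      show "integrable M
          (\<lambda>\<omega>. w (X \<omega>) * (cond_risk \<rho> \<psi> (p \<omega>) (q \<omega>) - cond_risk \<rho> \<psi> (p \<omega>) (p \<omega>)))"
        using risk(1)[OF beta] risk(1)[OF beta0] by (simp add: p_def q_def right_diff_distrib)
      show "0 \<le> w (X \<omega>) * (cond_risk \<rho> \<psi> (p \<omega>) (q \<omega>) - cond_risk \<rho> \<psi> (p \<omega>) (p \<omega>))" for \<omega>
        using w_nonneg A0(1) by (intro order_trans[OF _ growth]) simp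
    qed
    also have "\<dots> = Lobj \<rho> \<psi> M w X y \<alpha> \<beta> - Lobj \<rho> \<psi> M w X y \<alpha>0 \<beta>0"
      using risk[OF beta] risk[OF beta0] by (simp add: p_def q_def right_diff_distrib)
    finally show "Lobj \<rho> \<psi> M w X y \<alpha> \<beta> - Lobj \<rho> \<psi> M w X y \<alpha>0 \<beta>0 \<ge> A0 / 2 * piP2 M w X \<alpha> \<beta> \<alpha>0 \<beta>0" .
  qed (use A0 in simp)
qed

end
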